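(* Let $S_X,S_Y$ be finite nonempty action sets, $\varphi:S_X\times S_Y\to\mathbb{R}$, $\lambda\in[0,1)$, and let $\tau_X^+,\tau_X^-\in\Delta(S_X)$ satisfy $\max_{s_Y}\varphi(\tau_X^-,s_Y)\le0\le\min_{s_Y}\varphi(\tau_X^+,s_Y)$ together with $$\min_{s_Y}\varphi(\tau_X^+,s_Y)\ge(1-\lambda)\max_{s_Y}\varphi(\tau_X^+,s_Y)+\lambda\max_{s_Y}\varphi(\tau_X^-,s_Y),$$ $$\max_{s_Y}\varphi(\tau_X^-,s_Y)\le\lambda\min_{s_Y}\varphi(\tau_X^+,s_Y)+(1-\lambda)\min_{s_Y}\varphi(\tau_X^-,s_Y).$$ Then $X$ can enforce $\varphi\equiv0$ using a two-point reactive learning strategy (mixing $\tau_X^+$ and $\tau_X^-$), i.e., there is a $(\varphi,\lambda)$-autocratic two-point reactive learning strategy.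
   Context: Two players $X,Y$ play a repeated game with finite action sets $S_X,S_Y$; $\Delta(S)$ denotes the probability distributions on $S$; $\varphi(\tau_X,s_Y)=\mathbb{E}_{s_X\sim\tau_X}[\varphi(s_X,s_Y)]$; maxima/minima over $s_Y$ are over $S_Y$. Histories: $\mathcal{H}=\bigcup_{T\ge0}(S_X\times S_Y)^T$; behavioral strategies are maps $\sigma:\mathcal{H}\to\Delta(S)$; players independently draw actions each round from their strategies evaluated at the history of realized action pairs, with $\mathbb{E}_{\sigma_X,\sigma_Y}$ the expectation over the resulting play. $\sigma_X$ is $(\varphi,\lambda)$-autocratic if for every behavioral strategy $\sigma_Y$ of $Y$, $\mathbb{E}_{\sigma_X,\sigma_Y}[(1-\lambda)\sum_{t\ge0}\lambda^t\varphi(s_X^t,s_Y^t)]=0$. A two-point reactive learning strategy mixing $\tau_X^+,\tau_X^-$ is given by $p_0\in[0,1]$ and $p^*:[0,1]\times S_Y\to[0,1]$: it plays $p_0\tau_X^++(1-p_0)\tau_X^-$ in round $0$ and, if it played $p\tau_X^++(1-p)\tau_X^-$ in round $t$ and $Y$ played $s_Y$, it plays $p^*[p,s_Y]\tau_X^++(1-p^*[p,s_Y])\tau_X^-$ in round $t+1$. *)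

theory Defs
  imports "HOL-Probability.Probability"
begin

text \<open>Action sets are finite (nonempty) types 'a = S_X and 'b = S_Y.
 Mixed actions are pmfs; histories are lists of realized action pairs;
 a behavioral strategy maps histories to mixed actions.\<close>

type_synonym ('a,'b) history = "('a \<times> 'b) list"

definition payoff_mixed :: "('a \<Rightarrow> 'b \<Rightarrow> real) \<Rightarrow> 'a pmf \<Rightarrow> 'b \<Rightarrow> real" where
  "payoff_mixed \<phi> \<tau> sY = measure_pmf.expectation \<tau> (\<lambda>sX. \<phi> sX sY)"

fun hist_pmf :: "(('a,'b) history \<Rightarrow> 'a pmf) \<Rightarrow> (('a,'b) history \<Rightarrow> 'b pmf)
    \<Rightarrow> nat \<Rightarrow> ('a,'b) history pmf" where
  "hist_pmf \<sigma>X \<sigma>Y 0 = return_pmf []"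
| "hist_pmf \<sigma>X \<sigma>Y (Suc n) =
     bind_pmf (hist_pmf \<sigma>X \<sigma>Y n) (\<lambda>h.
     bind_pmf (\<sigma>X h) (\<lambda>sX.
     bind_pmf (\<sigma>Y h) (\<lambda>sY. return_pmf (h @ [(sX, sY)]))))"

definition round_pmf :: "(('a,'b) history \<Rightarrow> 'a pmf) \<Rightarrow> (('a,'b) history \<Rightarrow> 'b pmf)
    \<Rightarrow> nat \<Rightarrow> ('a \<times> 'b) pmf" where
  "round_pmf \<sigma>X \<sigma>Y t = map_pmf last (hist_pmf \<sigma>X \<sigma>Y (Suc t))"

text \<open>Expected discounted payoff: (1-\<lambda>) \<Sum> \<lambda>^t E[\<phi>(s_X^t,s_Y^t)]
  (expectation and the series are interchanged; \<phi> is bounded).\<close>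
definition discounted_value :: "('a \<Rightarrow> 'b \<Rightarrow> real) \<Rightarrow> real \<Rightarrow>
    (('a,'b) history \<Rightarrow> 'a pmf) \<Rightarrow> (('a,'b) history \<Rightarrow> 'b pmf) \<Rightarrow> real" where
  "discounted_value \<phi> \<delta> \<sigma>X \<sigma>Y =
     (1 - \<delta>) * (\<Sum>t. \<delta> ^ t * measure_pmf.expectation (round_pmf \<sigma>X \<sigma>Y t) (\<lambda>(sX, sY). \<phi> sX sY))"

definition autocratic :: "('a \<Rightarrow> 'b \<Rightarrow> real) \<Rightarrow> real \<Rightarrow> (('a,'b) history \<Rightarrow> 'a pmf) \<Rightarrow> bool" where
  "autocratic \<phi> \<delta> \<sigma>X \<longleftrightarrow> (\<forall>\<sigma>Y :: ('a,'b) history \<Rightarrow> 'b pmf. discounted_value \<phi> \<delta> \<sigma>X \<sigma>Y = 0)"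

definition mix2 :: "real \<Rightarrow> 'a pmf \<Rightarrow> 'a pmf \<Rightarrow> 'a pmf" where
  "mix2 p \<tau>p \<tau>m = bind_pmf (bernoulli_pmf p) (\<lambda>b. if b then \<tau>p else \<tau>m)"

definition rl_weight :: "real \<Rightarrow> (real \<Rightarrow> 'b \<Rightarrow> real) \<Rightarrow> ('a,'b) history \<Rightarrow> real" where
  "rl_weight p0 pstar h = foldl (\<lambda>p (sX, sY). pstar p sY) p0 h"

definition two_point_rl :: "'a pmf \<Rightarrow> 'a pmf \<Rightarrow> real \<Rightarrow> (real \<Rightarrow> 'b \<Rightarrow> real)
    \<Rightarrow> ('a,'b) history \<Rightarrow> 'a pmf" where
  "two_point_rl \<tau>p \<tau>m p0 pstar h = mix2 (rl_weight p0 pstar h) \<tau>p \<tau>m"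

end

theory Submission imports Defs begin

text \<open>X promises the continuation value \<open>w p = p m\<^sup>+ + (1 - p) M\<^sup>-\<close>, an affine function of its
  current weight \<open>p\<close> on \<open>\<tau>\<^sup>+\<close>, where \<open>m\<^sup>+\<close> is the minimal payoff of \<open>\<tau>\<^sup>+\<close> and \<open>M\<^sup>-\<close> the maximal
  payoff of \<open>\<tau>\<^sup>-\<close>. It starts with a weight \<open>p\<^sub>0\<close> with \<open>w p\<^sub>0 = 0\<close> (possible as \<open>M\<^sup>- \<le> 0 \<le> m\<^sup>+\<close>).
  After Y plays \<open>s\<^sub>Y\<close>, X picks the new weight \<open>p'\<close> solving
  \<open>(1 - \<lambda>) \<phi>(p \<tau>\<^sup>+ + (1 - p) \<tau>\<^sup>-, s\<^sub>Y) + \<lambda> w p' = w p\<close>; the two displayed inequalities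
  guarantee that the required \<open>\<lambda> w p'\<close> lies in \<open>[\<lambda> M\<^sup>-, \<lambda> m\<^sup>+]\<close>, the range of \<open>\<lambda> w\<close> on \<open>[0, 1]\<close>.
  Averaging this recursion over the play and telescoping shows that the discounted payoff
  equals \<open>w p\<^sub>0 = 0\<close>, whatever Y does.\<close>

lemma integrable_measure_pmf_bounded:
  fixes f :: "'a \<Rightarrow> real"
  assumes "\<And>x. \<bar>f x\<bar> \<le> B"
  shows "integrable (measure_pmf M) f"
  by (rule measure_pmf.integrable_const_bound[where B=B]) (use assms in auto)

lemma abs_expectation_le:
  fixes f :: "'a \<Rightarrow> real"
  assumes "\<And>x. \<bar>f x\<bar> \<le> B"
  shows "\<bar>measure_pmf.expectation M f\<bar> \<le> B"
proof -
  have "\<bar>measure_pmf.expectation M f\<bar> \<le> measure_pmf.expectation M (\<lambda>x. \<bar>f x\<bar>)"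
    by (rule integral_abs_bound)
  also have "\<dots> \<le> measure_pmf.expectation M (\<lambda>x. B)"
    using assms integrable_measure_pmf_bounded[of "\<lambda>x. \<bar>f x\<bar>" B] by (intro integral_mono) auto
  finally show ?thesis by simp
qed

lemma expectation_bind_pmf:
  fixes f :: "'b \<Rightarrow> real"
  assumes "\<And>y. \<bar>f y\<bar> \<le> B"
  shows "measure_pmf.expectation (M \<bind> N) f
       = measure_pmf.expectation M (\<lambda>x. measure_pmf.expectation (N x) f)"
  unfolding measure_pmf_bind
  by (rule integral_bind[where K="count_space UNIV" and B=B and B'=1])
     (use assms in \<open>auto simp: measure_pmf.emeasure_space_1 measure_pmf_in_subprob_algebra\<close>)

lemma expectation_swap_pmf:
  fixes g :: "'a \<Rightarrow> 'b \<Rightarrow> real"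
  assumes "\<And>a b. \<bar>g a b\<bar> \<le> B"
  shows "measure_pmf.expectation M (\<lambda>a. measure_pmf.expectation N (g a))
       = measure_pmf.expectation N (\<lambda>b. measure_pmf.expectation M (\<lambda>a. g a b))"
proof -
  have bound: "\<bar>case_prod g x\<bar> \<le> B" for x
    using assms by (cases x) simp
  have "measure_pmf.expectation M (\<lambda>a. measure_pmf.expectation N (g a))
      = measure_pmf.expectation (M \<bind> (\<lambda>a. N \<bind> (\<lambda>b. return_pmf (a, b)))) (case_prod g)"
    by (simp add: expectation_bind_pmf[OF bound])
  also have "\<dots> = measure_pmf.expectation (N \<bind> (\<lambda>b. M \<bind> (\<lambda>a. return_pmf (a, b)))) (case_prod g)"
    by (simp only: bind_commute_pmf[of M N])
  also have "\<dots> = measure_pmf.expectation N (\<lambda>b. measure_pmf.expectation M (\<lambda>a. g a b))"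
    by (simp add: expectation_bind_pmf[OF bound])
  finally show ?thesis .
qed

lemma expectation_hist_pmf_Suc:
  fixes f :: "('a,'b) history \<Rightarrow> real"
  assumes "\<And>h. \<bar>f h\<bar> \<le> B"
  shows "measure_pmf.expectation (hist_pmf \<sigma>X \<sigma>Y (Suc n)) f
    = measure_pmf.expectation (hist_pmf \<sigma>X \<sigma>Y n) (\<lambda>h. measure_pmf.expectation (\<sigma>X h)
        (\<lambda>a. measure_pmf.expectation (\<sigma>Y h) (\<lambda>b. f (h @ [(a, b)]))))"
  by (simp add: expectation_bind_pmf[OF assms])

lemma expectation_round_pmf:
  fixes \<phi> :: "'a \<Rightarrow> 'b \<Rightarrow> real"
  assumes "\<And>a b. \<bar>\<phi> a b\<bar> \<le> B"
  shows "measure_pmf.expectation (round_pmf \<sigma>X \<sigma>Y t) (\<lambda>(a, b). \<phi> a b)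
    = measure_pmf.expectation (hist_pmf \<sigma>X \<sigma>Y t) (\<lambda>h. measure_pmf.expectation (\<sigma>X h)
        (\<lambda>a. measure_pmf.expectation (\<sigma>Y h) (\<phi> a)))"
proof -
  have "\<bar>(case last h of (a, b) \<Rightarrow> \<phi> a b)\<bar> \<le> B" for h
    using assms by (simp split: prod.splits)
  then show ?thesis
    unfolding round_pmf_def integral_map_pmf by (subst expectation_hist_pmf_Suc) auto
qed

lemma discounted_sums_of_value_recursion:
  fixes E W :: "nat \<Rightarrow> real"
  assumes "0 \<le> \<delta>" "\<delta> < 1"
    and W_bound: "\<And>t. \<bar>W t\<bar> \<le> C"
    and recursion: "\<And>t. (1 - \<delta>) * E t + \<delta> * W (Suc t) = W t"
  shows "(\<lambda>t. (1 - \<delta>) * (\<delta> ^ t * E t)) sums W 0"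
proof -
  have "(\<lambda>t. \<delta> ^ t * W t) \<longlonglongrightarrow> 0"
  proof (rule Lim_null_comparison)
    show "\<forall>\<^sub>F t in sequentially. norm (\<delta> ^ t * W t) \<le> \<delta> ^ t * C"
      using W_bound \<open>0 \<le> \<delta>\<close> by (intro always_eventually allI) (simp add: abs_mult mult_left_mono)
    show "(\<lambda>t. \<delta> ^ t * C) \<longlonglongrightarrow> 0"
      using assms(1,2) by (intro tendsto_mult_left_zero LIMSEQ_power_zero) auto
  qed
  then have "(\<lambda>t. \<delta> ^ t * W t - \<delta> ^ Suc t * W (Suc t)) sums (\<delta> ^ 0 * W 0 - 0)"
    by (rule telescope_sums')
  moreover have "\<delta> ^ t * W t - \<delta> ^ Suc t * W (Suc t) = \<delta> ^ t * (W t - \<delta> * W (Suc t))" for t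
    by (simp add: algebra_simps)
  moreover have "W t - \<delta> * W (Suc t) = (1 - \<delta>) * E t" for t
    using recursion[of t] by linarith
  ultimately show ?thesis by (simp add: ac_simps)
qed

lemma autocratic_if_value_recursion:
  fixes \<phi> :: "'a \<Rightarrow> 'b \<Rightarrow> real" and V :: "('a,'b) history \<Rightarrow> real"
  assumes "0 \<le> \<delta>" "\<delta> < 1"
    and \<phi>_bound: "\<And>a b. \<bar>\<phi> a b\<bar> \<le> B"
    and V_bound: "\<And>h. \<bar>V h\<bar> \<le> C"
    and "V [] = 0"
    and recursion: "\<And>h q. (1 - \<delta>) * measure_pmf.expectation (\<sigma>X h) (\<lambda>a. measure_pmf.expectation q (\<phi> a))
        + \<delta> * measure_pmf.expectation (\<sigma>X h) (\<lambda>a. measure_pmf.expectation q (\<lambda>b. V (h @ [(a, b)])))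
        = V h"
  shows "autocratic \<phi> \<delta> \<sigma>X"
  unfolding autocratic_def
proof
  fix \<sigma>Y :: "('a,'b) history \<Rightarrow> 'b pmf"
  let ?H = "\<lambda>t. measure_pmf (hist_pmf \<sigma>X \<sigma>Y t)"
  define E where "E t = measure_pmf.expectation (round_pmf \<sigma>X \<sigma>Y t) (\<lambda>(a, b). \<phi> a b)" for t
  define W where "W t = measure_pmf.expectation (hist_pmf \<sigma>X \<sigma>Y t) V" for t
  define now where "now h = measure_pmf.expectation (\<sigma>X h) (\<lambda>a. measure_pmf.expectation (\<sigma>Y h) (\<phi> a))"
    for h
  define later where "later h = measure_pmf.expectation (\<sigma>X h)
      (\<lambda>a. measure_pmf.expectation (\<sigma>Y h) (\<lambda>b. V (h @ [(a, b)])))" for h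
  have "integrable (?H t) now" for t
    unfolding now_def by (intro integrable_measure_pmf_bounded[where B=B] abs_expectation_le \<phi>_bound)
  moreover have "integrable (?H t) later" for t
    unfolding later_def by (intro integrable_measure_pmf_bounded[where B=C] abs_expectation_le V_bound)
  moreover have "E t = integral\<^sup>L (?H t) now" "W (Suc t) = integral\<^sup>L (?H t) later" for t
    unfolding E_def now_def W_def later_def
    by (rule expectation_round_pmf[OF \<phi>_bound], rule expectation_hist_pmf_Suc[OF V_bound])
  ultimately have "(1 - \<delta>) * E t + \<delta> * W (Suc t) = (\<integral>h. (1 - \<delta>) * now h + \<delta> * later h \<partial>?H t)" for t
    by simp
  also have "\<dots> t = W t" for t
    unfolding now_def later_def W_def recursion ..
  finally have "(\<lambda>t. (1 - \<delta>) * (\<delta> ^ t * E t)) sums W 0"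
    using assms(1,2) abs_expectation_le[OF V_bound]
    by (intro discounted_sums_of_value_recursion[where C=C]) (auto simp: W_def)
  then have "(\<lambda>t. (1 - \<delta>) * (\<delta> ^ t * E t)) sums ((1 - \<delta>) * 0)"
    using \<open>V [] = 0\<close> by (simp add: W_def)
  then have "(\<lambda>t. \<delta> ^ t * E t) sums 0"
    using \<open>\<delta> < 1\<close> by (subst (asm) sums_mult_iff) auto
  then show "discounted_value \<phi> \<delta> \<sigma>X \<sigma>Y = 0"
    unfolding discounted_value_def E_def[symmetric] by (simp add: sums_iff)
qed

lemma expectation_mix2:
  fixes f :: "'a \<Rightarrow> real"
  assumes "0 \<le> p" "p \<le> 1" and "\<And>x. \<bar>f x\<bar> \<le> B"
  shows "measure_pmf.expectation (mix2 p \<tau>p \<tau>m) f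
     = p * measure_pmf.expectation \<tau>p f + (1 - p) * measure_pmf.expectation \<tau>m f"
  unfolding mix2_def expectation_bind_pmf[OF assms(3)] using assms(1,2) by simp

lemma rl_weight_snoc: "rl_weight p0 pstar (h @ [(a, b)]) = pstar (rl_weight p0 pstar h) b"
  by (simp add: rl_weight_def)

lemma rl_weight_in_unit_interval:
  assumes "p0 \<in> {0..1}" and "\<And>p b. p \<in> {0..1} \<Longrightarrow> pstar p b \<in> {0..1}"
  shows "rl_weight p0 pstar h \<in> {0..1}"
proof (induction h rule: rev_induct)
  case Nil
  then show ?case using assms(1) by (simp add: rl_weight_def)
next
  case (snoc x h)
  then show ?case using assms(2) by (cases x) (simp add: rl_weight_snoc)
qed

lemma autocratic_two_point_rl:
  fixes \<phi> :: "'a::finite \<Rightarrow> 'b::finite \<Rightarrow> real" and w :: "real \<Rightarrow> real"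
  assumes "0 \<le> \<delta>" "\<delta> < 1"
    and p0: "p0 \<in> {0..1}" and pstar: "\<And>p b. p \<in> {0..1} \<Longrightarrow> pstar p b \<in> {0..1}"
    and w_bound: "\<And>p. p \<in> {0..1} \<Longrightarrow> \<bar>w p\<bar> \<le> C"
    and "w p0 = 0"
    and recursion: "\<And>p b. p \<in> {0..1} \<Longrightarrow>
      (1 - \<delta>) * (p * payoff_mixed \<phi> \<tau>p b + (1 - p) * payoff_mixed \<phi> \<tau>m b) + \<delta> * w (pstar p b) = w p"
  shows "autocratic \<phi> \<delta> (two_point_rl \<tau>p \<tau>m p0 pstar)"
proof (rule autocratic_if_value_recursion[where V="\<lambda>h. w (rl_weight p0 pstar h)", OF assms(1,2)])
  let ?B = "\<Sum>x\<in>UNIV. \<bar>case_prod \<phi> x\<bar>"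
  have weight: "rl_weight p0 pstar h \<in> {0..1}" for h :: "('a,'b) history"
    using p0 pstar by (rule rl_weight_in_unit_interval)
  show \<phi>_bound: "\<bar>\<phi> a b\<bar> \<le> ?B" for a b
    using member_le_sum[of "(a, b)" UNIV "\<lambda>x. \<bar>case_prod \<phi> x\<bar>"] by simp
  show "\<bar>w (rl_weight p0 pstar h)\<bar> \<le> C" for h :: "('a,'b) history"
    using weight by (rule w_bound)
  show "w (rl_weight p0 pstar []) = 0"
    using \<open>w p0 = 0\<close> by (simp add: rl_weight_def)
  fix h :: "('a,'b) history" and q :: "'b pmf"
  define p where "p = rl_weight p0 pstar h"
  define g where "g b = p * payoff_mixed \<phi> \<tau>p b + (1 - p) * payoff_mixed \<phi> \<tau>m b" for b
  have p01: "p \<in> {0..1}" "0 \<le> p" "p \<le> 1"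
    using weight[of h] by (auto simp: p_def)
  have "measure_pmf.expectation (two_point_rl \<tau>p \<tau>m p0 pstar h) (\<lambda>a. measure_pmf.expectation q (\<phi> a))
      = measure_pmf.expectation q (\<lambda>b. measure_pmf.expectation (mix2 p \<tau>p \<tau>m) (\<lambda>a. \<phi> a b))"
    unfolding two_point_rl_def p_def by (rule expectation_swap_pmf[OF \<phi>_bound])
  also have "\<dots> = measure_pmf.expectation q g"
    unfolding g_def payoff_mixed_def using p01 \<phi>_bound by (subst expectation_mix2) auto
  finally have now: "measure_pmf.expectation (two_point_rl \<tau>p \<tau>m p0 pstar h)
      (\<lambda>a. measure_pmf.expectation q (\<phi> a)) = measure_pmf.expectation q g" .
  have later: "measure_pmf.expectation (two_point_rl \<tau>p \<tau>m p0 pstar h)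
      (\<lambda>a. measure_pmf.expectation q (\<lambda>b. w (rl_weight p0 pstar (h @ [(a, b)]))))
      = measure_pmf.expectation q (\<lambda>b. w (pstar p b))"
    by (simp add: rl_weight_snoc p_def)
  have "(1 - \<delta>) * measure_pmf.expectation q g + \<delta> * measure_pmf.expectation q (\<lambda>b. w (pstar p b))
      = measure_pmf.expectation q (\<lambda>b. (1 - \<delta>) * g b + \<delta> * w (pstar p b))"
    by (simp add: integrable_measure_pmf_finite)
  also have "\<dots> = w p"
    using recursion[OF p01(1)] by (simp add: g_def)
  finally show "(1 - \<delta>) * measure_pmf.expectation (two_point_rl \<tau>p \<tau>m p0 pstar h)
        (\<lambda>a. measure_pmf.expectation q (\<phi> a))
      + \<delta> * measure_pmf.expectation (two_point_rl \<tau>p \<tau>m p0 pstar h)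
        (\<lambda>a. measure_pmf.expectation q (\<lambda>b. w (rl_weight p0 pstar (h @ [(a, b)]))))
      = w (rl_weight p0 pstar h)"
    unfolding now later p_def .
qed

lemma exists_convex_weight:
  fixes \<delta> lo hi e :: real
  assumes "0 \<le> \<delta>" "\<delta> * lo \<le> e" "e \<le> \<delta> * hi"
  shows "\<exists>q\<in>{0..1}. \<delta> * (q * hi + (1 - q) * lo) = e"
proof -
  have "continuous_on {0..1} (\<lambda>q. \<delta> * (q * hi + (1 - q) * lo))"
    by (intro continuous_intros)
  then show ?thesis
    using IVT'[of "\<lambda>q. \<delta> * (q * hi + (1 - q) * lo)" 0 e 1] assms by auto
qed

lemma continuation_value_in_range:
  fixes \<delta> p F G mP MP mM MM :: real
  assumes "0 \<le> \<delta>" "\<delta> \<le> 1" "0 \<le> p" "p \<le> 1"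
    and "mP \<le> F" "F \<le> MP" "mM \<le> G" "G \<le> MM"
    and upper: "mP \<ge> (1 - \<delta>) * MP + \<delta> * MM"
    and lower: "MM \<le> \<delta> * mP + (1 - \<delta>) * mM"
  defines "e \<equiv> p * mP + (1 - p) * MM - (1 - \<delta>) * (p * F + (1 - p) * G)"
  shows "\<delta> * MM \<le> e" and "e \<le> \<delta> * mP"
proof -
  have "(1 - \<delta>) * F \<le> (1 - \<delta>) * MP" "(1 - \<delta>) * G \<le> (1 - \<delta>) * MM"
    "(1 - \<delta>) * mP \<le> (1 - \<delta>) * F" "(1 - \<delta>) * mM \<le> (1 - \<delta>) * G"
    using assms(2,5-8) by (simp_all add: mult_left_mono)
  then have "0 \<le> mP - (1 - \<delta>) * F - \<delta> * MM" "0 \<le> (1 - \<delta>) * (MM - G)"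
    "0 \<le> (1 - \<delta>) * (F - mP)" "0 \<le> \<delta> * mP + (1 - \<delta>) * G - MM"
    using upper lower by (simp_all add: algebra_simps)
  moreover have "e - \<delta> * MM = p * (mP - (1 - \<delta>) * F - \<delta> * MM) + (1 - p) * ((1 - \<delta>) * (MM - G))"
    "\<delta> * mP - e = p * ((1 - \<delta>) * (F - mP)) + (1 - p) * (\<delta> * mP + (1 - \<delta>) * G - MM)"
    unfolding e_def by (simp_all add: algebra_simps)
  ultimately show "\<delta> * MM \<le> e" "e \<le> \<delta> * mP"
    using assms(3,4) by (smt (verit) mult_nonneg_nonneg)+
qed

theorem corollary1:
  fixes \<phi> :: "'a::finite \<Rightarrow> 'b::finite \<Rightarrow> real"
    and \<delta> :: real
    and \<tau>p \<tau>m :: "'a pmf"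
  assumes "0 \<le> \<delta>" and "\<delta> < 1"
    and "(MAX sY. payoff_mixed \<phi> \<tau>m sY) \<le> 0"
    and "0 \<le> (MIN sY. payoff_mixed \<phi> \<tau>p sY)"
    and "(MIN sY. payoff_mixed \<phi> \<tau>p sY)
           \<ge> (1 - \<delta>) * (MAX sY. payoff_mixed \<phi> \<tau>p sY) + \<delta> * (MAX sY. payoff_mixed \<phi> \<tau>m sY)"
    and "(MAX sY. payoff_mixed \<phi> \<tau>m sY)
           \<le> \<delta> * (MIN sY. payoff_mixed \<phi> \<tau>p sY) + (1 - \<delta>) * (MIN sY. payoff_mixed \<phi> \<tau>m sY)"
  shows "\<exists>p0 pstar. p0 \<in> {0..1} \<and> (\<forall>p\<in>{0..1}. \<forall>sY. pstar p sY \<in> {0..1})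
           \<and> autocratic \<phi> \<delta> (two_point_rl \<tau>p \<tau>m p0 pstar)"
proof -
  define F G where "F = payoff_mixed \<phi> \<tau>p" and "G = payoff_mixed \<phi> \<tau>m"
  define mP MP mM MM where "mP = (MIN b. F b)" and "MP = (MAX b. F b)"
    and "mM = (MIN b. G b)" and "MM = (MAX b. G b)"
  define w where "w p = p * mP + (1 - p) * MM" for p
  define next_value where "next_value p b = w p - (1 - \<delta>) * (p * F b + (1 - p) * G b)" for p b
  have hyps: "MM \<le> 0" "0 \<le> mP" "mP \<ge> (1 - \<delta>) * MP + \<delta> * MM" "MM \<le> \<delta> * mP + (1 - \<delta>) * mM"
    using assms(3-6) by (simp_all add: F_def G_def mP_def MP_def mM_def MM_def)
  have extremes: "mP \<le> F b" "F b \<le> MP" "mM \<le> G b" "G b \<le> MM" for b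
    by (auto simp: mP_def MP_def mM_def MM_def)
  obtain p0 where p0: "p0 \<in> {0..1}" "w p0 = 0"
    using exists_convex_weight[of 1 MM 0 mP] hyps(1,2) by (auto simp: w_def)
  have "\<exists>q\<in>{0..1}. \<delta> * w q = next_value p b" if "p \<in> {0..1}" for p b
    using that assms(1,2) hyps(3,4) extremes[of b]
      continuation_value_in_range[of \<delta> p mP "F b" MP mM "G b" MM]
      exists_convex_weight[of \<delta> MM "next_value p b" mP]
    by (simp add: w_def next_value_def)
  then obtain pstar where pstar: "\<And>p b. p \<in> {0..1} \<Longrightarrow> pstar p b \<in> {0..1} \<and> \<delta> * w (pstar p b) = next_value p b"
    by metis
  have "\<bar>w p\<bar> \<le> \<bar>mP\<bar> + \<bar>MM\<bar>" if "p \<in> {0..1}" for p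
    using that unfolding w_def
    by (intro order.trans[OF abs_triangle_ineq] add_mono) (auto simp: abs_mult intro!: mult_left_le_one_le)
  then have "autocratic \<phi> \<delta> (two_point_rl \<tau>p \<tau>m p0 pstar)"
    using assms(1,2) p0 pstar
    by (intro autocratic_two_point_rl[where w=w]) (auto simp: next_value_def F_def G_def)
  then show ?thesis
    using p0 pstar by blast
qed

end
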